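(* For every odd $q\geq 3$, the generalized Farey map $F_q\colon[0,1]\to[0,1]$ is topologically mixing: for all nonempty open sets $B_1,B_2\subseteq[0,1]$ there is $N\in\mathbb{N}$ such that $F_q^{n}(B_1)\cap B_2\neq\emptyset$ for all $n\geq N$.
   Context: Let $q\geq 3$ be odd and $\lambda=2\cos(\pi/q)$. Elements of $\mathrm{PGL}_2(\mathbb{R})$ act on $\mathbb{R}\cup\{\infty\}$ by $\begin{bmatrix}a&b\\c&d\end{bmatrix}.x=(ax+b)/(cx+d)$. Put $s(x)=\sin(x\pi/q)/\sin(\pi/q)$, $g_k=\begin{bmatrix}s(k)&-s(k+1)\\-s(k-1)&s(k)\end{bmatrix}$, $Q=\begin{bmatrix}0&1\\1&0\end{bmatrix}$, $K=\{(q+1)/2,\dots,q-1\}$. The generalized Farey map $F_q\colon[0,1]\to[0,1]$ is defined, for $k\in K$, by $F_q(x)=g_k.x$ for $x\in[g_k^{-1}.0,g_k^{-1}.1]$ and $F_q(x)=Qg_k.x$ for $x\in[(Qg_k)^{-1}.1,(Qg_k)^{-1}.0]$ (these intervals cover $[0,1]$, overlap only at endpoints, and the definitions agree there). *)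

theory Defs
  imports "HOL-Analysis.Analysis"
begin

text \<open>Elements of PGL_2(R) represented by real 2x2 matrices (a,b,c,d) = [a b; c d].\<close>
type_synonym mat2 = "real \<times> real \<times> real \<times> real"

definition mact :: "mat2 \<Rightarrow> real \<Rightarrow> real" where
  "mact M x = (case M of (a,b,c,d) \<Rightarrow> (a * x + b) / (c * x + d))"

definition mmul :: "mat2 \<Rightarrow> mat2 \<Rightarrow> mat2" where
  "mmul M N = (case M of (a,b,c,d) \<Rightarrow> case N of (e,f,g,h) \<Rightarrow>
     (a*e + b*g, a*f + b*h, c*e + d*g, c*f + d*h))"

text \<open>Inverse in PGL_2: the adjugate (a scalar multiple of the inverse matrix).\<close>
definition minv :: "mat2 \<Rightarrow> mat2" where
  "minv M = (case M of (a,b,c,d) \<Rightarrow> (d, -b, -c, a))"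

definition sq :: "nat \<Rightarrow> real \<Rightarrow> real" where
  "sq q x = sin (x * pi / real q) / sin (pi / real q)"

definition gk :: "nat \<Rightarrow> nat \<Rightarrow> mat2" where
  "gk q k = (sq q (real k), - sq q (real k + 1), - sq q (real k - 1), sq q (real k))"

definition Qm :: mat2 where "Qm = (0, 1, 1, 0)"

definition Kset :: "nat \<Rightarrow> nat set" where
  "Kset q = {(q + 1) div 2 .. q - 1}"

text \<open>The generalized Farey map on [0,1]. On overlapping endpoints the branches agree
  (as stated in the paper); we pick any applicable branch.\<close>
definition farey :: "nat \<Rightarrow> real \<Rightarrow> real" where
  "farey q x = (SOME y. \<exists>k\<in>Kset q.
      (x \<in> {mact (minv (gk q k)) 0 .. mact (minv (gk q k)) 1} \<and> y = mact (gk q k) x) \<or>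
      (x \<in> {mact (minv (mmul Qm (gk q k))) 1 .. mact (minv (mmul Qm (gk q k))) 0}
         \<and> y = mact (mmul Qm (gk q k)) x))"

end

theory Submission
  imports Defs
begin

text \<open>Each branch of F_q is a fractional linear map of determinant one from a subinterval
  of [0,1] onto [0,1], so F y - F x = \<plusminus>(y - x) / (d x * d y) with a denominator 0 < d \<le> 1.
  Hence F_q never shrinks intervals, and it stretches them by a definite factor away from 0 and
  1, where d stays below some \<theta> < 1. The image of an interval J therefore grows by a fixed
  amount at every step as long as it lies inside one branch. Once it contains a branch end in
  its interior, a piece of it is mapped onto an interval ending at 0 or 1; the branch at 1 sends
  1 to 0, and 0 is a parabolic fixed point with F x \<ge> x + x^2, so such an interval grows
  until it contains the whole branch at 0 and is mapped onto [0,1]. As F_q maps [0,1] onto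
  itself, all later iterates of J cover [0,1], which gives mixing.\<close>

section \<open>Expanding maps with full branches and a parabolic fixed point\<close>

lemma abs_diff_add_if_monotone:
  fixes f :: "real \<Rightarrow> real"
  assumes "mono_on S f \<or> antimono_on S f" and "x \<in> S" "u \<in> S" "y \<in> S" "x \<le> u" "u \<le> y"
  shows "\<bar>f y - f x\<bar> = \<bar>f y - f u\<bar> + \<bar>f u - f x\<bar>"
  using assms by (auto simp: monotone_on_def)

locale full_branch_map =
  fixes F :: "real \<Rightarrow> real" and branches :: "'b set" and lo hi :: "'b \<Rightarrow> real"
  assumes branch_interval: "b \<in> branches \<Longrightarrow> 0 \<le> lo b \<and> lo b < hi b \<and> hi b \<le> 1"
    and branches_cover: "x \<in> {0..1} \<Longrightarrow> \<exists>b\<in>branches. x \<in> {lo b..hi b}"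
    and branch_continuous: "b \<in> branches \<Longrightarrow> continuous_on {lo b..hi b} F"
    and branch_monotone: "b \<in> branches \<Longrightarrow> mono_on {lo b..hi b} F \<or> antimono_on {lo b..hi b} F"
    and branch_full: "b \<in> branches \<Longrightarrow> {F (lo b), F (hi b)} = {0, 1}"
    and branch_expanding:
      "b \<in> branches \<Longrightarrow> lo b \<le> x \<Longrightarrow> x \<le> y \<Longrightarrow> y \<le> hi b \<Longrightarrow> y - x \<le> \<bar>F y - F x\<bar>"
    and uniformly_expanding_inside: "0 < \<delta> \<Longrightarrow> \<delta> < 1/2 \<Longrightarrow> \<exists>c>0. \<forall>b\<in>branches. \<forall>x y.
      lo b \<le> x \<and> \<delta> \<le> x \<and> x \<le> y \<and> y \<le> hi b \<and> y \<le> 1 - \<delta> \<longrightarrow> (1 + c) * (y - x) \<le> \<bar>F y - F x\<bar>"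
    and parabolic_at_0: "\<exists>b\<in>branches. lo b = 0 \<and> F 0 = 0 \<and> (\<forall>x\<in>{0..hi b}. x + x\<^sup>2 \<le> F x)"
    and branch_at_1: "\<exists>b\<in>branches. hi b = 1 \<and> F 1 = 0"
begin

definition iterate_covers_unit :: "real set \<Rightarrow> bool" where
  "iterate_covers_unit A \<longleftrightarrow> (\<exists>m. {0..1} \<subseteq> (F ^^ m) ` A)"

lemma branch_image_unit:
  assumes b: "b \<in> branches" and x: "x \<in> {lo b..hi b}"
  shows "F x \<in> {0..1}"
proof -
  have "lo b \<in> {lo b..hi b}" "hi b \<in> {lo b..hi b}" using branch_interval[OF b] by auto
  then have "F (lo b) \<le> F x \<and> F x \<le> F (hi b) \<or> F (hi b) \<le> F x \<and> F x \<le> F (lo b)"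
    using branch_monotone[OF b] x by (auto simp: monotone_on_def)
  then show ?thesis using branch_full[OF b] by (auto simp: doubleton_eq_iff)
qed

lemma branch_image_Icc:
  assumes b: "b \<in> branches" and "lo b \<le> x" "x \<le> y" "y \<le> hi b"
  shows "{min (F x) (F y)..max (F x) (F y)} \<subseteq> F ` {x..y}"
proof -
  have "continuous_on {x..y} F"
    using branch_continuous[OF b] by (rule continuous_on_subset) (use assms in auto)
  then have "connected (F ` {x..y})" by (intro connected_continuous_image) auto
  moreover have "F x \<in> F ` {x..y}" "F y \<in> F ` {x..y}" using assms by auto
  ultimately show ?thesis using connected_contains_Icc[of "F ` {x..y}"] by (cases "F x \<le> F y") auto
qed

lemma unit_subset_branch_image: "b \<in> branches \<Longrightarrow> {0..1} \<subseteq> F ` {lo b..hi b}"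
  using branch_image_Icc[of b "lo b" "hi b"] branch_interval[of b] branch_full[of b]
  by (auto simp: doubleton_eq_iff)

lemma unit_subset_image_unit: "{0..1} \<subseteq> F ` {0..1}"
proof -
  obtain b where b: "b \<in> branches" using parabolic_at_0 by auto
  then have "{lo b..hi b} \<subseteq> {0..1}" using branch_interval by auto
  then show ?thesis using unit_subset_branch_image[OF b] by blast
qed

lemma image_subset_funpow_Suc: "X \<subseteq> (F ^^ n) ` A \<Longrightarrow> F ` X \<subseteq> (F ^^ Suc n) ` A"
  by (auto simp: image_comp)

lemma unit_subset_funpow_image_mono:
  assumes "{0..1} \<subseteq> (F ^^ n) ` A" "n \<le> m"
  shows "{0..1} \<subseteq> (F ^^ m) ` A"
  using assms(2,1)
proof (induction m rule: dec_induct)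
  case (step m)
  then have "F ` {0..1} \<subseteq> (F ^^ Suc m) ` A" by (intro image_subset_funpow_Suc) auto
  then show ?case using unit_subset_image_unit by blast
qed

text \<open>Near the parabolic fixed point an initial segment [0, e] with e \<ge> z is mapped onto
  [0, F e] with F e \<ge> e + e^2 \<ge> e + z^2, so it grows by a fixed amount until it contains the
  whole branch at 0.\<close>
lemma iterate_covers_unit_of_initial_segment:
  assumes z: "0 < z" and cover: "{0..z} \<subseteq> (F ^^ n) ` A"
  shows "iterate_covers_unit A"
proof (rule ccontr)
  assume not_covers: "\<not> iterate_covers_unit A"
  obtain b0 where b0: "b0 \<in> branches" "lo b0 = 0" "F 0 = 0"
    and parabolic: "\<And>x. x \<in> {0..hi b0} \<Longrightarrow> x + x\<^sup>2 \<le> F x"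
    using parabolic_at_0 by auto
  have "\<exists>e. z + real j * z\<^sup>2 \<le> e \<and> e \<le> 1 \<and> {0..e} \<subseteq> (F ^^ (n + j)) ` A" for j
  proof (induction j)
    case 0
    show ?case
    proof (cases "z \<le> 1")
      case True
      then show ?thesis using cover by (intro exI[of _ z]) auto
    next
      case False
      then have "{0..1} \<subseteq> (F ^^ n) ` A" using cover by auto
      then show ?thesis using not_covers unfolding iterate_covers_unit_def by blast
    qed
  next
    case (Suc j)
    then obtain e where e: "z + real j * z\<^sup>2 \<le> e" "e \<le> 1" "{0..e} \<subseteq> (F ^^ (n + j)) ` A"
      by auto
    have "z \<le> e" using e(1) z by (smt (verit) mult_nonneg_nonneg of_nat_0_le_iff zero_le_power2)
    have "e \<le> hi b0"
    proof (rule ccontr)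
      assume "\<not> e \<le> hi b0"
      then have "F ` {lo b0..hi b0} \<subseteq> (F ^^ Suc (n + j)) ` A"
        using e(3) b0 by (intro image_subset_funpow_Suc) auto
      then have "{0..1} \<subseteq> (F ^^ Suc (n + j)) ` A"
        using unit_subset_branch_image[OF b0(1)] by blast
      then show False using not_covers unfolding iterate_covers_unit_def by blast
    qed
    then have e_in: "e \<in> {lo b0..hi b0}" using \<open>z \<le> e\<close> z b0 by auto
    have grow: "e + e\<^sup>2 \<le> F e" using parabolic \<open>z \<le> e\<close> \<open>e \<le> hi b0\<close> z by auto
    have "{0..F e} \<subseteq> F ` {0..e}"
      using branch_image_Icc[OF b0(1), of 0 e] b0 e_in grow \<open>z \<le> e\<close> z
      by (smt (verit) atLeastAtMost_iff order_trans subsetI zero_le_power2 min_def max_def)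
    then have "{0..F e} \<subseteq> (F ^^ (n + Suc j)) ` A"
      using image_subset_funpow_Suc[OF e(3)] by auto
    moreover have "F e \<le> 1" using branch_image_unit[OF b0(1) e_in] by auto
    moreover have "z\<^sup>2 \<le> e\<^sup>2" using \<open>z \<le> e\<close> z by (intro power_mono) auto
    then have "z + real (Suc j) * z\<^sup>2 \<le> F e" using grow e(1) by (simp add: algebra_simps)
    ultimately show ?case by blast
  qed
  moreover obtain j where "1 < real j * z\<^sup>2" using ex_less_of_nat_mult[of "z\<^sup>2" 1] z by auto
  ultimately show False using z by (smt (verit) zero_le_power2)
qed

lemma iterate_covers_unit_of_final_segment:
  assumes z: "0 \<le> z" "z < 1" and cover: "{z..1} \<subseteq> (F ^^ n) ` A"
  shows "iterate_covers_unit A"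
proof -
  obtain b1 where b1: "b1 \<in> branches" "hi b1 = 1" "F 1 = 0" using branch_at_1 by auto
  show ?thesis
  proof (cases "z \<le> lo b1")
    case True
    then have "F ` {lo b1..hi b1} \<subseteq> (F ^^ Suc n) ` A"
      using cover b1 by (intro image_subset_funpow_Suc) auto
    then show ?thesis
      using unit_subset_branch_image[OF b1(1)] unfolding iterate_covers_unit_def by blast
  next
    case False
    then have z_in: "z \<in> {lo b1..hi b1}" using b1 z by auto
    have "1 - z \<le> \<bar>F 1 - F z\<bar>" using branch_expanding[OF b1(1), of z 1] z_in b1 by auto
    then have "0 < F z" using branch_image_unit[OF b1(1) z_in] b1 z by auto
    moreover have "{0..F z} \<subseteq> F ` {z..1}"
      using branch_image_Icc[OF b1(1), of z 1] z_in b1 \<open>0 < F z\<close> by auto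
    then have "{0..F z} \<subseteq> (F ^^ Suc n) ` A" using image_subset_funpow_Suc[OF cover] by blast
    ultimately show ?thesis by (rule iterate_covers_unit_of_initial_segment)
  qed
qed

lemma iterate_covers_unit_of_branch_end:
  assumes b: "b \<in> branches" and xy: "lo b \<le> x" "x < y" "y \<le> hi b"
    and ends: "F x \<in> {0, 1} \<or> F y \<in> {0, 1}" and cover: "{x..y} \<subseteq> (F ^^ n) ` A"
  shows "iterate_covers_unit A"
proof -
  have image: "{min (F x) (F y)..max (F x) (F y)} \<subseteq> (F ^^ Suc n) ` A"
    using branch_image_Icc[OF b, of x y] xy image_subset_funpow_Suc[OF cover] by fastforce
  have "y - x \<le> \<bar>F y - F x\<bar>" using branch_expanding[OF b, of x y] xy by auto
  then have "F x \<noteq> F y" using xy by auto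
  moreover have "F x \<in> {0..1}" "F y \<in> {0..1}" using branch_image_unit[OF b] xy by auto
  ultimately consider
      z where "0 < z" "{0..z} \<subseteq> (F ^^ Suc n) ` A"
    | z where "0 \<le> z" "z < 1" "{z..1} \<subseteq> (F ^^ Suc n) ` A"
    using ends image by (smt (verit, ccfv_threshold) atLeastAtMost_iff insert_iff singletonD
        max_def min_def)
  then show ?thesis
    by cases (blast intro: iterate_covers_unit_of_initial_segment
        iterate_covers_unit_of_final_segment)+
qed

lemma iterate_covers_unit_of_inner_branch_end:
  assumes "{a..b} \<subseteq> (F ^^ n) ` A" and c: "c \<in> branches"
    and inner: "lo c \<in> {a<..<b} \<or> hi c \<in> {a<..<b}"
  shows "iterate_covers_unit A"
  using inner
proof
  assume "lo c \<in> {a<..<b}"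
  then show ?thesis
    using assms branch_interval[OF c] branch_full[OF c]
    by (intro iterate_covers_unit_of_branch_end[OF c, of "lo c" "min b (hi c)"]) auto
next
  assume "hi c \<in> {a<..<b}"
  then show ?thesis
    using assms branch_interval[OF c] branch_full[OF c]
    by (intro iterate_covers_unit_of_branch_end[OF c, of "max a (lo c)" "hi c"]) auto
qed

text \<open>Cut [x, y] at \<delta> and 1 - \<delta>: the middle piece has length at least \<delta> and is expanded by
  the factor 1 + c, the outer pieces are not shrunk.\<close>
lemma branch_expansion_of_long_interval:
  assumes b: "b \<in> branches" and xy: "lo b \<le> x" "x \<le> y" "y \<le> hi b"
    and long: "3 * \<delta> \<le> y - x" and "0 < \<delta>" "0 \<le> c"
    and inside: "\<forall>x y. lo b \<le> x \<and> \<delta> \<le> x \<and> x \<le> y \<and> y \<le> hi b \<and> y \<le> 1 - \<delta> \<longrightarrow>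
      (1 + c) * (y - x) \<le> \<bar>F y - F x\<bar>"
  shows "(y - x) + c * \<delta> \<le> \<bar>F y - F x\<bar>"
proof -
  define u where "u = max x \<delta>"
  define v where "v = min y (1 - \<delta>)"
  have uv: "x \<le> u" "u \<le> v" "v \<le> y" "\<delta> \<le> v - u" "\<delta> \<le> u" "v \<le> 1 - \<delta>"
    using xy long branch_interval[OF b] \<open>0 < \<delta>\<close> unfolding u_def v_def by auto
  have "\<bar>F y - F x\<bar> = \<bar>F y - F v\<bar> + \<bar>F v - F u\<bar> + \<bar>F u - F x\<bar>"
    using abs_diff_add_if_monotone[OF branch_monotone[OF b]] xy uv
    by (smt (verit, best) atLeastAtMost_iff)
  moreover have "y - v \<le> \<bar>F y - F v\<bar>" "u - x \<le> \<bar>F u - F x\<bar>"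
    using branch_expanding[OF b] xy uv by auto
  moreover have "(1 + c) * (v - u) \<le> \<bar>F v - F u\<bar>" using inside xy uv by auto
  moreover have "c * \<delta> \<le> c * (v - u)" using uv \<open>0 \<le> c\<close> by (intro mult_left_mono) auto
  ultimately show ?thesis by (simp add: algebra_simps)
qed

lemma interval_image_grows:
  assumes ab: "0 \<le> a" "a < b" "b \<le> 1" and long: "3 * \<delta> \<le> b - a" and "0 < \<delta>" "0 \<le> c"
    and inside: "\<forall>\<beta>\<in>branches. \<forall>x y. lo \<beta> \<le> x \<and> \<delta> \<le> x \<and> x \<le> y \<and> y \<le> hi \<beta> \<and> y \<le> 1 - \<delta> \<longrightarrow>
      (1 + c) * (y - x) \<le> \<bar>F y - F x\<bar>"
    and no_inner_end: "\<forall>\<beta>\<in>branches. lo \<beta> \<notin> {a<..<b} \<and> hi \<beta> \<notin> {a<..<b}"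
  shows "\<exists>a' b'. 0 \<le> a' \<and> b' \<le> 1 \<and> (b - a) + c * \<delta> \<le> b' - a' \<and> {a'..b'} \<subseteq> F ` {a..b}"
proof -
  obtain \<beta> where \<beta>: "\<beta> \<in> branches" "(a + b) / 2 \<in> {lo \<beta>..hi \<beta>}"
    using branches_cover[of "(a + b) / 2"] ab by auto
  then have in_branch: "lo \<beta> \<le> a" "b \<le> hi \<beta>" using no_inner_end ab by fastforce+
  have "(b - a) + c * \<delta> \<le> \<bar>F b - F a\<bar>"
    using branch_expansion_of_long_interval[OF \<beta>(1) in_branch(1) _ in_branch(2) long] ab inside
      \<beta>(1) \<open>0 < \<delta>\<close> \<open>0 \<le> c\<close> by auto
  moreover have "F a \<in> {0..1}" "F b \<in> {0..1}" using branch_image_unit[OF \<beta>(1)] in_branch ab by auto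
  ultimately show ?thesis
    using branch_image_Icc[OF \<beta>(1) in_branch(1), of b] in_branch ab
    by (intro exI[of _ "min (F a) (F b)"] exI[of _ "max (F a) (F b)"]) auto
qed

lemma iterate_covers_unit_interval:
  assumes "0 \<le> a0" "a0 < b0" "b0 \<le> 1"
  shows "iterate_covers_unit {a0..b0}"
proof (rule ccontr)
  assume not_covers: "\<not> iterate_covers_unit {a0..b0}"
  define \<delta> where "\<delta> = (b0 - a0) / 3"
  have \<delta>: "0 < \<delta>" "\<delta> < 1/2" using assms unfolding \<delta>_def by auto
  obtain c where "0 < c" and inside: "\<forall>\<beta>\<in>branches. \<forall>x y. lo \<beta> \<le> x \<and> \<delta> \<le> x \<and> x \<le> y \<and>
      y \<le> hi \<beta> \<and> y \<le> 1 - \<delta> \<longrightarrow> (1 + c) * (y - x) \<le> \<bar>F y - F x\<bar>"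
    using uniformly_expanding_inside[OF \<delta>] by blast
  have "\<exists>a b. 0 \<le> a \<and> b \<le> 1 \<and> (b0 - a0) + real n * c * \<delta> \<le> b - a \<and>
      {a..b} \<subseteq> (F ^^ n) ` {a0..b0}" for n
  proof (induction n)
    case 0
    show ?case using assms by auto
  next
    case (Suc n)
    then obtain a b where ab: "0 \<le> a" "b \<le> 1" "(b0 - a0) + real n * c * \<delta> \<le> b - a"
      and cover: "{a..b} \<subseteq> (F ^^ n) ` {a0..b0}" by auto
    have "0 \<le> real n * c * \<delta>" using \<open>0 < c\<close> \<delta> by simp
    then have long: "3 * \<delta> \<le> b - a" using ab(3) by (simp add: \<delta>_def)
    have "\<forall>\<beta>\<in>branches. lo \<beta> \<notin> {a<..<b} \<and> hi \<beta> \<notin> {a<..<b}"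
      using iterate_covers_unit_of_inner_branch_end[OF cover] not_covers by blast
    then obtain a' b' where "0 \<le> a'" "b' \<le> 1" "(b - a) + c * \<delta> \<le> b' - a'"
      "{a'..b'} \<subseteq> F ` {a..b}"
      using interval_image_grows[OF ab(1) _ ab(2) long \<delta>(1) _ inside] long \<delta> \<open>0 < c\<close> by auto
    then show ?case
      using ab(3) image_subset_funpow_Suc[OF cover]
      by (intro exI[of _ a'] exI[of _ b']) (auto simp: algebra_simps)
  qed
  moreover obtain n where "1 < real n * (c * \<delta>)"
    using ex_less_of_nat_mult[of "c * \<delta>" 1] \<open>0 < c\<close> \<delta> by auto
  ultimately show False using assms by (smt (verit, best) mult.assoc)
qed

lemma topologically_mixing:
  assumes B1: "openin (top_of_set {0..1}) B1" "B1 \<noteq> {}"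
    and B2: "openin (top_of_set {0..1}) B2" "B2 \<noteq> {}"
  shows "\<exists>N. \<forall>n\<ge>N. (F ^^ n) ` B1 \<inter> B2 \<noteq> {}"
proof -
  obtain x e where x: "x \<in> B1" and "0 < e" and ball: "cball x e \<inter> {0..1} \<subseteq> B1"
    using B1 unfolding openin_contains_cball by blast
  have "x \<in> {0..1}" using x openin_imp_subset[OF B1(1)] by auto
  define a where "a = max 0 (x - e)"
  define b where "b = min 1 (x + e)"
  have ab: "0 \<le> a" "a < b" "b \<le> 1" using \<open>0 < e\<close> \<open>x \<in> {0..1}\<close> unfolding a_def b_def by auto
  have "{a..b} \<subseteq> B1"
    unfolding a_def b_def by (auto simp: dist_real_def intro!: subsetD[OF ball])
  obtain m where m: "{0..1} \<subseteq> (F ^^ m) ` {a..b}"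
    using iterate_covers_unit_interval[OF ab] unfolding iterate_covers_unit_def by blast
  have "(F ^^ n) ` B1 \<inter> B2 \<noteq> {}" if "m \<le> n" for n
  proof -
    have "{0..1} \<subseteq> (F ^^ n) ` B1"
      using unit_subset_funpow_image_mono[OF m that] \<open>{a..b} \<subseteq> B1\<close> by (meson image_mono order_trans)
    then show ?thesis using openin_imp_subset[OF B2(1)] B2(2) by blast
  qed
  then show ?thesis by blast
qed

end


section \<open>Ratios of sines\<close>

lemma sin_add_mult_sin_diff: "sin (a + b) * sin (a - b) = sin a ^ 2 - sin b ^ 2" for a b :: real
proof -
  have "sin (a + b) * sin (a - b) = (sin a * cos b)^2 - (cos a * sin b)^2"
    by (simp add: sin_add sin_diff power2_eq_square algebra_simps)
  also have "\<dots> = sin a ^ 2 - sin b ^ 2"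
    by (simp add: power_mult_distrib cos_squared_eq algebra_simps)
  finally show ?thesis .
qed

lemma sin_le_sin_between:
  assumes "0 < a" "a \<le> pi / 2" "a \<le> t" "t \<le> pi - a"
  shows "sin a \<le> sin t"
proof (cases "t \<le> pi / 2")
  case True
  then show ?thesis using assms by (intro sin_monotone_2pi_le) auto
next
  case False
  then have "sin a \<le> sin (pi - t)" using assms by (intro sin_monotone_2pi_le) auto
  then show ?thesis by simp
qed

context
  fixes q :: nat
  assumes q_ge_2: "2 \<le> q"
begin

lemma sin_pi_div_pos: "0 < sin (pi / real q)"
  using q_ge_2 by (intro sin_gt_zero) (auto simp: divide_less_eq)

lemma sq_casoratian: "sq q x ^ 2 - sq q (x + 1) * sq q (x - 1) = 1"
proof -
  define t where "t = pi / real q"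
  define a where "a = x * pi / real q"
  have "(x + 1) * pi / real q = a + t" "(x - 1) * pi / real q = a - t"
    unfolding a_def t_def by (simp_all add: algebra_simps add_divide_distrib diff_divide_distrib)
  then have "sq q x ^ 2 - sq q (x + 1) * sq q (x - 1) =
      (sin a ^ 2 - sin (a + t) * sin (a - t)) / sin t ^ 2"
    unfolding sq_def a_def[symmetric] t_def[symmetric]
    by (simp add: power_divide diff_divide_distrib power2_eq_square)
  also have "\<dots> = 1" using sin_pi_div_pos unfolding t_def by (simp add: sin_add_mult_sin_diff)
  finally show ?thesis .
qed

lemma sq_nonneg: "0 \<le> x \<Longrightarrow> x \<le> real q \<Longrightarrow> 0 \<le> sq q x"
  unfolding sq_def using sin_pi_div_pos q_ge_2
  by (intro divide_nonneg_pos sin_ge_zero) (auto simp: divide_le_eq)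

lemma sq_self: "sq q (real q) = 0"
  unfolding sq_def using q_ge_2 by simp

lemma sq_1: "sq q 1 = 1"
  unfolding sq_def using sin_pi_div_pos by simp

lemma sq_reflect: "sq q (real q - x) = sq q x"
proof -
  have "(real q - x) * pi / real q = pi - x * pi / real q" using q_ge_2 by (simp add: field_simps)
  then show ?thesis unfolding sq_def by simp
qed

lemma sq_ge_shift:
  assumes "1 \<le> j" "real j \<le> real q / 2" "real j \<le> x" "x \<le> real q - real j"
  shows "sq q (real j) \<le> sq q x"
proof -
  have q: "0 < real q" using q_ge_2 by auto
  have "sin (real j * pi / real q) \<le> sin (x * pi / real q)"
  proof (rule sin_le_sin_between)
    show "0 < real j * pi / real q" using assms q by auto
    show "real j * pi / real q \<le> pi / 2" using assms q by (simp add: field_simps)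
    show "real j * pi / real q \<le> x * pi / real q" using assms q by (simp add: divide_right_mono)
    have "x * pi / real q \<le> (real q - real j) * pi / real q"
      using assms q by (intro divide_right_mono mult_right_mono) auto
    also have "\<dots> = pi - real j * pi / real q" using q by (simp add: field_simps)
    finally show "x * pi / real q \<le> pi - real j * pi / real q" .
  qed
  then show ?thesis unfolding sq_def using sin_pi_div_pos by (simp add: divide_right_mono)
qed

lemma sq_ge_1: "1 \<le> x \<Longrightarrow> x \<le> real q - 1 \<Longrightarrow> 1 \<le> sq q x"
  using sq_ge_shift[of 1 x] sq_1 q_ge_2 by simp

text \<open>sq q 2 = 2 cos (pi / q) is the number \<lambda> of the paper.\<close>
lemma sq_2_gt_1: "5 \<le> q \<Longrightarrow> 1 < sq q 2"
proof -
  assume "5 \<le> q"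
  have "sq q 2 = 2 * cos (pi / real q)"
    using sin_double[of "pi / real q"] sin_pi_div_pos unfolding sq_def by simp
  moreover have "pi / real q < pi / 3" using \<open>5 \<le> q\<close> by (intro divide_strict_left_mono) auto
  then have "cos (pi / 3) < cos (pi / real q)" by (intro cos_monotone_0_pi) auto
  ultimately show ?thesis by (simp add: cos_60)
qed

end

text \<open>The matrix [b, -a; -c, b] has determinant 1; these are the values of its two rows at the
  points a/b, (b + a)/(c + b), b/c, which become the ends of the Farey branches.\<close>
lemma unimodular_row_values:
  fixes a b c :: real
  assumes det: "b^2 - a*c = 1" and "0 < b" "0 < c" "0 \<le> a"
  shows "a/b < (b + a)/(c + b)" "(b + a)/(c + b) < b/c"
    "b - c * (a/b) = 1/b" "b - c * ((b + a)/(c + b)) = 1/(c + b)"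
    "b * ((b + a)/(c + b)) - a = 1/(c + b)" "b * (b/c) - a = 1/c"
proof -
  have det': "b * b = a * c + 1" using det by (simp add: power2_eq_square)
  show "a/b < (b + a)/(c + b)" "(b + a)/(c + b) < b/c"
    "b - c * ((b + a)/(c + b)) = 1/(c + b)" "b * ((b + a)/(c + b)) - a = 1/(c + b)"
    using assms det' by (simp_all add: field_simps; simp add: algebra_simps)+
  show "b - c * (a/b) = 1/b" "b * (b/c) - a = 1/c" using assms det' by (simp_all add: field_simps)
qed

lemma unimodular_rows_cross:
  fixes a b c :: real
  assumes "b^2 - a*c = 1"
  shows "(b*y - a) * (b - c*z) - (b*z - a) * (b - c*y) = y - z"
proof -
  have "(b*y - a) * (b - c*z) - (b*z - a) * (b - c*y) = (b^2 - a*c) * (y - z)"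
    by (simp add: algebra_simps power2_eq_square)
  then show ?thesis using assms by simp
qed


section \<open>The generalized Farey map\<close>

locale odd_farey =
  fixes q :: nat
  assumes odd_q: "odd q" and q_ge_3: "3 \<le> q"
begin

abbreviation s :: "real \<Rightarrow> real" where "s \<equiv> sq q"

lemma q_ge_2: "2 \<le> q"
  using q_ge_3 by simp

definition node :: "nat \<Rightarrow> real" where
  "node j = s (real j) / s (real j - 1)"

definition mid :: "nat \<Rightarrow> real" where
  "mid k = (s (real k) + s (real k + 1)) / (s (real k - 1) + s (real k))"

definition numer :: "nat \<Rightarrow> real \<Rightarrow> real" where
  "numer k x = s (real k) * x - s (real k + 1)"

definition denom :: "nat \<Rightarrow> real \<Rightarrow> real" where
  "denom k x = s (real k) - s (real k - 1) * x"

lemma node_Suc: "node (Suc k) = s (real k + 1) / s (real k)"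
  unfolding node_def by (simp add: add.commute)

lemma mact_gk: "mact (gk q k) x = numer k x / denom k x"
  unfolding mact_def gk_def numer_def denom_def by (simp add: algebra_simps)

lemma mact_Qm_gk: "mact (mmul Qm (gk q k)) x = denom k x / numer k x"
  unfolding mact_def gk_def numer_def denom_def mmul_def Qm_def by (simp add: algebra_simps)

lemma gk_inverse_ends:
  "mact (minv (gk q k)) 0 = node (Suc k)" "mact (minv (gk q k)) 1 = mid k"
  "mact (minv (mmul Qm (gk q k))) 1 = mid k" "mact (minv (mmul Qm (gk q k))) 0 = node k"
proof -
  have "(- s (real k) - s (real k + 1)) / (- s (real k - 1) - s (real k)) = mid k"
    unfolding mid_def by (metis minus_add_distrib diff_conv_add_uminus minus_divide_divide)
  then show "mact (minv (mmul Qm (gk q k))) 1 = mid k"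
    unfolding mact_def gk_def minv_def mmul_def Qm_def by simp
qed (simp_all add: mact_def gk_def minv_def mmul_def Qm_def node_def node_Suc mid_def add.commute)

lemma sq_bounds_casoratian:
  assumes "2 \<le> k" "k \<le> q - 1"
  shows "s (real k)^2 - s (real k + 1) * s (real k - 1) = 1"
    "1 \<le> s (real k)" "1 \<le> s (real k - 1)" "0 \<le> s (real k + 1)"
  using sq_casoratian[OF q_ge_2] sq_ge_1[OF q_ge_2] sq_nonneg[OF q_ge_2] assms q_ge_3 by auto

lemma Kset_bounds: "k \<in> Kset q \<Longrightarrow> 2 \<le> k \<and> k \<le> q - 1"
  using q_ge_3 unfolding Kset_def by auto

lemma sq_bounds_casoratian_Kset:
  assumes "k \<in> Kset q"
  shows "s (real k)^2 - s (real k + 1) * s (real k - 1) = 1"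
    "1 \<le> s (real k)" "1 \<le> s (real k - 1)" "0 \<le> s (real k + 1)"
  using sq_bounds_casoratian Kset_bounds[OF assms] by auto

lemma node_mid_node:
  assumes "2 \<le> k" "k \<le> q - 1"
  shows "node (Suc k) < mid k" "mid k < node k"
  using unimodular_row_values(1,2)[OF sq_bounds_casoratian(1)[OF assms]]
    sq_bounds_casoratian[OF assms]
  unfolding node_Suc node_def mid_def by (simp_all add: add.commute)

lemma node_antimono:
  assumes "2 \<le> i" "i \<le> j" "j \<le> q"
  shows "node j \<le> node i"
  using assms(2,3)
proof (induction j rule: dec_induct)
  case (step j)
  then show ?case using node_mid_node[of j] assms(1) by fastforce
qed simp

lemma node_self: "node q = 0"
  unfolding node_def using sq_self[OF q_ge_2] by simp

lemma node_middle: "node ((q + 1) div 2) = 1"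
proof -
  define k where "k = (q + 1) div 2"
  have "real k - 1 = real q - real k" using odd_q unfolding k_def by (auto elim!: oddE)
  then have "s (real k - 1) = s (real k)" by (metis sq_reflect[OF q_ge_2])
  moreover have "1 \<le> s (real k)" using sq_ge_1[OF q_ge_2] odd_q q_ge_3 unfolding k_def
    by (auto elim!: oddE)
  ultimately show ?thesis unfolding node_def k_def by simp
qed

lemma numer_denom_values:
  assumes "k \<in> Kset q"
  shows "numer k (node (Suc k)) = 0" "denom k (node k) = 0"
    "numer k (mid k) = 1 / (s (real k - 1) + s (real k))"
    "denom k (mid k) = 1 / (s (real k - 1) + s (real k))"
    "numer k (node k) = 1 / s (real k - 1)" "denom k (node (Suc k)) = 1 / s (real k)"
proof -
  note data = sq_bounds_casoratian_Kset[OF assms]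
  note row_values = unimodular_row_values[OF data(1)] data
  show "numer k (node (Suc k)) = 0" "denom k (node k) = 0"
    using data unfolding numer_def denom_def node_Suc node_def by (simp_all add: add.commute)
  show "numer k (mid k) = 1 / (s (real k - 1) + s (real k))"
    "denom k (mid k) = 1 / (s (real k - 1) + s (real k))"
    "numer k (node k) = 1 / s (real k - 1)" "denom k (node (Suc k)) = 1 / s (real k)"
    using row_values unfolding numer_def denom_def node_Suc node_def mid_def
    by (simp_all add: add.commute)
qed

lemma numer_denom_cross:
  "k \<in> Kset q \<Longrightarrow> numer k y * denom k z - numer k z * denom k y = y - z"
  using unimodular_rows_cross sq_bounds_casoratian_Kset(1) unfolding numer_def denom_def by blast

text \<open>The index (k, True) stands for the branch g_k of the Farey map, (k, False) for Q g_k;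
  branch_den is the denominator of the fractional linear map on the branch.\<close>
definition branches :: "(nat \<times> bool) set" where
  "branches = Kset q \<times> UNIV"

fun branch_lo :: "nat \<times> bool \<Rightarrow> real" where
  "branch_lo (k, True) = node (Suc k)"
| "branch_lo (k, False) = mid k"

fun branch_hi :: "nat \<times> bool \<Rightarrow> real" where
  "branch_hi (k, True) = mid k"
| "branch_hi (k, False) = node k"

fun branch_mat :: "nat \<times> bool \<Rightarrow> mat2" where
  "branch_mat (k, True) = gk q k"
| "branch_mat (k, False) = mmul Qm (gk q k)"

fun branch_den :: "nat \<times> bool \<Rightarrow> real \<Rightarrow> real" where
  "branch_den (k, True) = denom k"
| "branch_den (k, False) = numer k"

lemma branchesE:
  assumes "b \<in> branches"
  obtains k t where "b = (k, t)" "k \<in> Kset q"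
  using assms unfolding branches_def by auto

lemma branch_ends_between_nodes:
  assumes "b \<in> branches"
  shows "node (Suc (fst b)) \<le> branch_lo b" "branch_lo b < branch_hi b" "branch_hi b \<le> node (fst b)"
proof -
  obtain k t where b: "b = (k, t)" and k: "k \<in> Kset q" using assms by (rule branchesE)
  have "node (Suc k) < mid k" "mid k < node k" using node_mid_node Kset_bounds[OF k] by auto
  then show "node (Suc (fst b)) \<le> branch_lo b" "branch_lo b < branch_hi b"
    "branch_hi b \<le> node (fst b)"
    unfolding b by (cases t; simp)+
qed

lemma branch_in_unit:
  assumes "b \<in> branches"
  shows "0 \<le> branch_lo b" "branch_hi b \<le> 1"
proof -
  obtain k t where b: "b = (k, t)" and k: "k \<in> Kset q" using assms by (rule branchesE)
  then have "(q + 1) div 2 \<le> k" "Suc k \<le> q" using q_ge_3 unfolding Kset_def by auto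
  then have "node q \<le> node (Suc k)" "node k \<le> node ((q + 1) div 2)"
    using Kset_bounds[OF k] by (auto intro!: node_antimono)
  then show "0 \<le> branch_lo b" "branch_hi b \<le> 1"
    using branch_ends_between_nodes[OF assms] node_self node_middle b by auto
qed

lemma branch_den_bounds:
  assumes "b \<in> branches" "x \<in> {branch_lo b..branch_hi b}"
  shows "1 / (s (real (fst b) - 1) + s (real (fst b))) \<le> branch_den b x"
    "branch_den b x \<le> (if snd b then 1 / s (real (fst b)) else 1 / s (real (fst b) - 1))"
proof -
  obtain k t where b: "b = (k, t)" and k: "k \<in> Kset q" using assms(1) by (rule branchesE)
  note data = sq_bounds_casoratian_Kset[OF k]
  note end_values = numer_denom_values[OF k]
  have "1 / (s (real k - 1) + s (real k)) \<le> branch_den (k, t) x \<and>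
      branch_den (k, t) x \<le> (if t then 1 / s (real k) else 1 / s (real k - 1))"
  proof (cases t)
    case True
    then have "denom k (mid k) \<le> denom k x" "denom k x \<le> denom k (node (Suc k))"
      using assms b data unfolding denom_def by (auto intro!: mult_left_mono)
    then show ?thesis using end_values True by simp
  next
    case False
    then have "numer k (mid k) \<le> numer k x" "numer k x \<le> numer k (node k)"
      using assms b data unfolding numer_def by (auto intro!: mult_left_mono)
    then show ?thesis using end_values False by simp
  qed
  then show "1 / (s (real (fst b) - 1) + s (real (fst b))) \<le> branch_den b x"
    "branch_den b x \<le> (if snd b then 1 / s (real (fst b)) else 1 / s (real (fst b) - 1))"
    using b by auto
qed

lemma branch_den_pos_le_1:
  assumes "b \<in> branches" "x \<in> {branch_lo b..branch_hi b}"
  shows "0 < branch_den b x" "branch_den b x \<le> 1"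
proof -
  obtain k t where b: "b = (k, t)" and k: "k \<in> Kset q" using assms(1) by (rule branchesE)
  note data = sq_bounds_casoratian_Kset[OF k]
  have "0 < 1 / (s (real k - 1) + s (real k))" using data by simp
  moreover have "1 / (s (real k - 1) + s (real k)) \<le> branch_den b x"
    using branch_den_bounds(1)[OF assms] unfolding b by simp
  ultimately show "0 < branch_den b x" by linarith
  have "(if t then 1 / s (real k) else 1 / s (real k - 1)) \<le> 1" using data by simp
  moreover have "branch_den b x \<le> (if t then 1 / s (real k) else 1 / s (real k - 1))"
    using branch_den_bounds(2)[OF assms] unfolding b by (cases t) simp_all
  ultimately show "branch_den b x \<le> 1" by linarith
qed

lemma branch_mat_at_ends:
  assumes "k \<in> Kset q"
  shows "mact (branch_mat (k, True)) (node (Suc k)) = 0" "mact (branch_mat (k, True)) (mid k) = 1"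
    "mact (branch_mat (k, False)) (mid k) = 1" "mact (branch_mat (k, False)) (node k) = 0"
  using numer_denom_values[OF assms] sq_bounds_casoratian_Kset[OF assms]
  by (simp_all add: mact_gk mact_Qm_gk)

lemma farey_eq_some_branch:
  "farey q x = (SOME y. \<exists>b\<in>branches. x \<in> {branch_lo b..branch_hi b} \<and> y = mact (branch_mat b) x)"
proof -
  have "(\<exists>b\<in>branches. x \<in> {branch_lo b..branch_hi b} \<and> y = mact (branch_mat b) x) \<longleftrightarrow>
      (\<exists>k\<in>Kset q. (x \<in> {node (Suc k)..mid k} \<and> y = mact (gk q k) x) \<or>
        (x \<in> {mid k..node k} \<and> y = mact (mmul Qm (gk q k)) x))" for y
  proof
    assume "\<exists>b\<in>branches. x \<in> {branch_lo b..branch_hi b} \<and> y = mact (branch_mat b) x"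
    then obtain k t where "k \<in> Kset q" "x \<in> {branch_lo (k, t)..branch_hi (k, t)}"
      "y = mact (branch_mat (k, t)) x"
      by (auto elim!: branchesE)
    then show "\<exists>k\<in>Kset q. (x \<in> {node (Suc k)..mid k} \<and> y = mact (gk q k) x) \<or>
        (x \<in> {mid k..node k} \<and> y = mact (mmul Qm (gk q k)) x)"
      by (cases t) auto
  next
    assume "\<exists>k\<in>Kset q. (x \<in> {node (Suc k)..mid k} \<and> y = mact (gk q k) x) \<or>
        (x \<in> {mid k..node k} \<and> y = mact (mmul Qm (gk q k)) x)"
    then obtain k where "k \<in> Kset q" and "(x \<in> {branch_lo (k, True)..branch_hi (k, True)} \<and>
        y = mact (branch_mat (k, True)) x) \<or> (x \<in> {branch_lo (k, False)..branch_hi (k, False)} \<and>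
        y = mact (branch_mat (k, False)) x)"
      by auto
    then show "\<exists>b\<in>branches. x \<in> {branch_lo b..branch_hi b} \<and> y = mact (branch_mat b) x"
      unfolding branches_def by blast
  qed
  then show ?thesis unfolding farey_def gk_inverse_ends by simp
qed

lemma branch_maps_vanish_at_common_node:
  assumes b: "b \<in> branches" and b': "b' \<in> branches" and lt: "fst b < fst b'"
    and x: "x \<in> {branch_lo b..branch_hi b}" "x \<in> {branch_lo b'..branch_hi b'}"
  shows "mact (branch_mat b) x = 0" "mact (branch_mat b') x = 0"
proof -
  obtain k t where bk: "b = (k, t)" and k: "k \<in> Kset q" using b by (rule branchesE)
  obtain k' t' where bk': "b' = (k', t')" and k': "k' \<in> Kset q" using b' by (rule branchesE)
  have "node k' \<le> node (Suc k)" using Kset_bounds[OF k] Kset_bounds[OF k'] lt bk bk'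
    by (intro node_antimono) auto
  then have "x = node (Suc k)" "x = node k'" "branch_lo b = node (Suc k)" "branch_hi b' = node k'"
    using branch_ends_between_nodes[OF b] branch_ends_between_nodes[OF b'] x bk bk' by auto
  moreover have "node (Suc k) < mid k" "mid k' < node k'"
    using node_mid_node Kset_bounds[OF k] Kset_bounds[OF k'] by auto
  ultimately have "t" "\<not> t'" using bk bk' by (cases t; cases t'; auto)+
  then show "mact (branch_mat b) x = 0" "mact (branch_mat b') x = 0"
    using branch_mat_at_ends[OF k] branch_mat_at_ends[OF k'] \<open>x = node (Suc k)\<close> \<open>x = node k'\<close>
      bk bk' by auto
qed

lemma branch_maps_agree:
  assumes b: "b \<in> branches" and b': "b' \<in> branches"
    and x: "x \<in> {branch_lo b..branch_hi b}" "x \<in> {branch_lo b'..branch_hi b'}"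
  shows "mact (branch_mat b) x = mact (branch_mat b') x"
proof (cases "fst b = fst b'")
  case True
  obtain k t where bk: "b = (k, t)" and k: "k \<in> Kset q" using b by (rule branchesE)
  obtain t' where bk': "b' = (k, t')" using True bk by (cases b') auto
  show ?thesis
  proof (cases "t = t'")
    case False
    then have "x = mid k" using x bk bk' by (cases t) auto
    then show ?thesis using branch_mat_at_ends[OF k] bk bk' False by (cases t) auto
  qed (use bk bk' in simp)
next
  case False
  then show ?thesis
    using branch_maps_vanish_at_common_node[OF b b' _ x]
      branch_maps_vanish_at_common_node[OF b' b _ x(2,1)]
    by (cases "fst b < fst b'") auto
qed

lemma farey_on_branch:
  assumes "b \<in> branches" "x \<in> {branch_lo b..branch_hi b}"
  shows "farey q x = mact (branch_mat b) x"
  unfolding farey_eq_some_branch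
proof (rule some_equality)
  fix y
  assume "\<exists>b'\<in>branches. x \<in> {branch_lo b'..branch_hi b'} \<and> y = mact (branch_mat b') x"
  then show "y = mact (branch_mat b) x" using branch_maps_agree[OF assms(1) _ assms(2)] by force
qed (use assms in blast)

lemma node_bracket:
  assumes x: "x \<in> {0..1}"
  shows "\<exists>k\<in>Kset q. x \<in> {node (Suc k)..node k}"
proof -
  define J where "J = {j. (q + 1) div 2 \<le> j \<and> j \<le> q \<and> x \<le> node j}"
  define j where "j = Max J"
  have "(q + 1) div 2 \<in> J" using x node_middle q_ge_3 unfolding J_def by auto
  moreover have "finite J" unfolding J_def by auto
  ultimately have "j \<in> J" and greatest: "\<And>i. i \<in> J \<Longrightarrow> i \<le> j"
    unfolding j_def by (auto intro: Max_in)
  then have j: "(q + 1) div 2 \<le> j" "j \<le> q" "x \<le> node j" unfolding J_def by auto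
  have "node (Suc j) < x" if "Suc j \<le> q"
    using greatest[of "Suc j"] that j(1) unfolding J_def by force
  show ?thesis
  proof (cases "j = q")
    case True
    have "Suc (q - 1) = q" "node q \<le> node (q - 1)" using q_ge_3 by (auto intro!: node_antimono)
    then show ?thesis using True j x node_self q_ge_3
      by (intro bexI[of _ "q - 1"]) (auto simp: Kset_def)
  next
    case False
    then show ?thesis using j \<open>Suc j \<le> q \<Longrightarrow> node (Suc j) < x\<close>
      by (intro bexI[of _ j]) (auto simp: Kset_def)
  qed
qed

lemma branches_cover: "x \<in> {0..1} \<Longrightarrow> \<exists>b\<in>branches. x \<in> {branch_lo b..branch_hi b}"
proof -
  assume "x \<in> {0..1}"
  then obtain k where k: "k \<in> Kset q" and x: "x \<in> {node (Suc k)..node k}"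
    using node_bracket by blast
  show ?thesis
  proof (cases "x \<le> mid k")
    case True
    then show ?thesis using k x unfolding branches_def by (intro bexI[of _ "(k, True)"]) auto
  next
    case False
    then show ?thesis using k x unfolding branches_def by (intro bexI[of _ "(k, False)"]) auto
  qed
qed

lemma farey_diff_on_branch:
  assumes b: "b \<in> branches" and x: "x \<in> {branch_lo b..branch_hi b}"
    and y: "y \<in> {branch_lo b..branch_hi b}"
  shows "farey q y - farey q x =
    (if snd b then y - x else x - y) / (branch_den b x * branch_den b y)"
proof -
  obtain k t where bk: "b = (k, t)" and k: "k \<in> Kset q" using b by (rule branchesE)
  have den: "branch_den b x \<noteq> 0" "branch_den b y \<noteq> 0"
    using branch_den_pos_le_1(1)[OF b] x y by (metis less_irrefl)+
  note cross = numer_denom_cross[OF k]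
  show ?thesis
  proof (cases t)
    case True
    then have "farey q y - farey q x = numer k y / denom k y - numer k x / denom k x"
      using farey_on_branch[OF b] x y bk by (simp add: mact_gk)
    also have "\<dots> = (numer k y * denom k x - numer k x * denom k y) / (denom k x * denom k y)"
      using den bk True by (simp add: field_simps)
    finally show ?thesis using cross bk True by simp
  next
    case False
    then have "farey q y - farey q x = denom k y / numer k y - denom k x / numer k x"
      using farey_on_branch[OF b] x y bk by (simp add: mact_Qm_gk)
    also have "\<dots> = (numer k x * denom k y - numer k y * denom k x) / (numer k x * numer k y)"
      using den bk False by (simp add: field_simps)
    finally show ?thesis using cross bk False by simp
  qed
qed

lemma farey_abs_diff_on_branch:
  assumes b: "b \<in> branches" and "branch_lo b \<le> x" "x \<le> y" "y \<le> branch_hi b"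
  shows "\<bar>farey q y - farey q x\<bar> = (y - x) / (branch_den b x * branch_den b y)"
  using farey_diff_on_branch[OF b, of x y] branch_den_pos_le_1(1)[OF b, of x]
    branch_den_pos_le_1(1)[OF b, of y] assms
  by (auto simp: abs_div abs_mult)


lemma farey_continuous_on_branch:
  assumes b: "b \<in> branches"
  shows "continuous_on {branch_lo b..branch_hi b} (farey q)"
proof -
  obtain k t where bk: "b = (k, t)" and k: "k \<in> Kset q" using b by (rule branchesE)
  have den: "branch_den b x \<noteq> 0" if "x \<in> {branch_lo b..branch_hi b}" for x
    using branch_den_pos_le_1(1)[OF b that] by simp
  have cont: "continuous_on {branch_lo b..branch_hi b} (numer k)"
    "continuous_on {branch_lo b..branch_hi b} (denom k)"
    unfolding numer_def denom_def by (intro continuous_intros)+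
  have "continuous_on {branch_lo b..branch_hi b} (mact (branch_mat b))"
  proof (cases t)
    case True
    then have "mact (branch_mat b) = (\<lambda>x. numer k x / denom k x)"
      using bk by (simp add: fun_eq_iff mact_gk)
    moreover have "continuous_on {branch_lo b..branch_hi b} (\<lambda>x. numer k x / denom k x)"
      using den bk True by (intro continuous_on_divide cont) auto
    ultimately show ?thesis by simp
  next
    case False
    then have "mact (branch_mat b) = (\<lambda>x. denom k x / numer k x)"
      using bk by (simp add: fun_eq_iff mact_Qm_gk)
    moreover have "continuous_on {branch_lo b..branch_hi b} (\<lambda>x. denom k x / numer k x)"
      using den bk False by (intro continuous_on_divide cont) auto
    ultimately show ?thesis by simp
  qed
  then show ?thesis by (rule continuous_on_eq) (simp add: farey_on_branch[OF b])
qed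

lemma farey_monotone_on_branch:
  assumes b: "b \<in> branches"
  shows "mono_on {branch_lo b..branch_hi b} (farey q) \<or>
    antimono_on {branch_lo b..branch_hi b} (farey q)"
proof -
  have sign: "if snd b then farey q x \<le> farey q y else farey q y \<le> farey q x"
    if "x \<in> {branch_lo b..branch_hi b}" "y \<in> {branch_lo b..branch_hi b}" "x \<le> y" for x y
  proof -
    have "0 < branch_den b x * branch_den b y" using branch_den_pos_le_1(1)[OF b] that by simp
    then have "0 \<le> (y - x) / (branch_den b x * branch_den b y)" using that(3) by simp
    moreover have "(x - y) / (branch_den b x * branch_den b y) =
        - ((y - x) / (branch_den b x * branch_den b y))"
      by (simp add: minus_divide_left)
    ultimately show ?thesis using farey_diff_on_branch[OF b that(1,2)] by (cases "snd b") auto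
  qed
  show ?thesis by (cases "snd b") (auto intro!: monotone_onI dest: sign)
qed

lemma farey_expansion_on_branch:
  assumes b: "b \<in> branches" and xy: "branch_lo b \<le> x" "x \<le> y" "y \<le> branch_hi b"
    and "branch_den b x \<le> \<theta>" "branch_den b y \<le> \<theta>"
  shows "(y - x) / \<theta>^2 \<le> \<bar>farey q y - farey q x\<bar>"
proof -
  have "0 < branch_den b x" "0 < branch_den b y" using branch_den_pos_le_1(1)[OF b] xy by auto
  then have "branch_den b x * branch_den b y \<le> \<theta>^2" "0 < branch_den b x * branch_den b y"
    "0 < \<theta>"
    using assms by (auto simp: power2_eq_square intro: mult_mono)
  then have "(y - x) / \<theta>^2 \<le> (y - x) / (branch_den b x * branch_den b y)"
    using xy by (intro divide_left_mono) auto
  then show ?thesis using farey_abs_diff_on_branch[OF b xy] by simp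
qed

lemma sq_q_minus_1: "s (real q - 1) = 1"
  using sq_reflect[OF q_ge_2, of 1] sq_1[OF q_ge_2] by simp

lemma sq_q_minus_2: "s (real q - 2) = s 2"
  using sq_reflect[OF q_ge_2, of 2] by simp

lemma sq_2_ge_1: "1 \<le> s 2"
  using sq_ge_1[OF q_ge_2, of 2] q_ge_3 by simp

lemma denom_last: "denom (q - 1) x = 1 - s 2 * x"
  using q_ge_3 sq_q_minus_1 sq_q_minus_2 unfolding denom_def by (simp add: of_nat_diff)

text \<open>Away from the two branches touching the parabolic fixed point 0 and its preimage 1 the
  denominators are at most 1/\<lambda> < 1; on those two branches they are 1 - \<lambda>x and x.\<close>
lemma branch_den_cases:
  assumes b: "b \<in> branches" and x: "x \<in> {branch_lo b..branch_hi b}"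
  shows "(5 \<le> q \<and> branch_den b x \<le> 1 / s 2) \<or> branch_den b x \<le> 1 - x \<or> branch_den b x \<le> x"
proof -
  obtain k t where bk: "b = (k, t)" and k: "k \<in> Kset q" using b by (rule branchesE)
  have k_range: "(q + 1) div 2 \<le> k" "k \<le> q - 1" using k unfolding Kset_def by auto
  have "0 < s 2" using sq_2_ge_1 by simp
  note upper = branch_den_bounds(2)[OF b x]
  show ?thesis
  proof (cases t)
    case True
    show ?thesis
    proof (cases "k \<le> q - 2")
      case k_le: True
      then have "5 \<le> q" using k_range odd_q q_ge_3 by presburger
      then have "s 2 \<le> s (real k)" using k_le k_range
        by (intro sq_ge_shift[OF q_ge_2, of 2, simplified]) auto
      then have "1 / s (real k) \<le> 1 / s 2" using \<open>0 < s 2\<close> by (intro divide_left_mono) auto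
      then show ?thesis using upper bk True \<open>5 \<le> q\<close> by auto
    next
      case False
      then have "k = q - 1" using k_range by auto
      then have "branch_den b x = 1 - s 2 * x" using bk True denom_last by simp
      moreover have "x \<le> s 2 * x" using sq_2_ge_1 x branch_in_unit[OF b]
        by (simp add: mult_le_cancel_right1)
      ultimately show ?thesis by auto
    qed
  next
    case False
    show ?thesis
    proof (cases "3 \<le> k")
      case k_ge: True
      then have "5 \<le> q" using k_range odd_q q_ge_3 by presburger
      then have "s 2 \<le> s (real k - 1)" using k_ge k_range
        by (intro sq_ge_shift[OF q_ge_2, of 2, simplified]) auto
      then have "1 / s (real k - 1) \<le> 1 / s 2" using \<open>0 < s 2\<close> by (intro divide_left_mono) auto
      then show ?thesis using upper bk False \<open>5 \<le> q\<close> by auto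
    next
      case k_lt: False
      then have "k = 2" "q = 3" using k_range q_ge_3 odd_q by presburger+
      then have "s (real k) = 1" "s (real k + 1) = 0"
        using sq_q_minus_1 sq_self[OF q_ge_2] by simp_all
      then show ?thesis using bk False by (simp add: numer_def)
    qed
  qed
qed

lemma branch_den_le_inside:
  assumes "0 < \<delta>" "\<delta> < 1/2"
  obtains \<theta> where "0 < \<theta>" "\<theta> < 1"
    "\<And>b x. b \<in> branches \<Longrightarrow> x \<in> {branch_lo b..branch_hi b} \<Longrightarrow> \<delta> \<le> x \<Longrightarrow> x \<le> 1 - \<delta> \<Longrightarrow>
       branch_den b x \<le> \<theta>"
proof
  define \<mu> where "\<mu> = (if 5 \<le> q then 1 / s 2 else 0)"
  show "0 < max \<mu> (1 - \<delta>)" "max \<mu> (1 - \<delta>) < 1"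
    using assms sq_2_gt_1[OF q_ge_2] unfolding \<mu>_def by auto
  fix b x
  assume "b \<in> branches" "x \<in> {branch_lo b..branch_hi b}" "\<delta> \<le> x" "x \<le> 1 - \<delta>"
  then show "branch_den b x \<le> max \<mu> (1 - \<delta>)"
    using branch_den_cases[of b x] unfolding \<mu>_def by auto
qed

lemma farey_uniformly_expanding_inside:
  assumes "0 < \<delta>" "\<delta> < 1/2"
  shows "\<exists>c>0. \<forall>b\<in>branches. \<forall>x y. branch_lo b \<le> x \<and> \<delta> \<le> x \<and> x \<le> y \<and> y \<le> branch_hi b \<and>
    y \<le> 1 - \<delta> \<longrightarrow> (1 + c) * (y - x) \<le> \<bar>farey q y - farey q x\<bar>"
proof -
  obtain \<theta> where \<theta>: "0 < \<theta>" "\<theta> < 1" and den: "\<And>b x. b \<in> branches \<Longrightarrow>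
      x \<in> {branch_lo b..branch_hi b} \<Longrightarrow> \<delta> \<le> x \<Longrightarrow> x \<le> 1 - \<delta> \<Longrightarrow> branch_den b x \<le> \<theta>"
    using branch_den_le_inside[OF assms] by blast
  have "\<theta>^2 < 1" using \<theta> by (simp add: power_less_one_iff)
  then have "0 < 1 / \<theta>^2 - 1" using \<theta> by (simp add: field_simps)
  moreover have "(1 + (1 / \<theta>^2 - 1)) * (y - x) \<le> \<bar>farey q y - farey q x\<bar>"
    if "b \<in> branches" "branch_lo b \<le> x" "\<delta> \<le> x" "x \<le> y" "y \<le> branch_hi b" "y \<le> 1 - \<delta>" for b x y
    using farey_expansion_on_branch[OF that(1,2,4,5) den den] that by simp
  ultimately show ?thesis by blast
qed

lemma farey_at_branch_ends:
  assumes "b \<in> branches"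
  shows "{farey q (branch_lo b), farey q (branch_hi b)} = {0, 1}"
proof -
  obtain k t where bk: "b = (k, t)" and k: "k \<in> Kset q" using assms by (rule branchesE)
  have "branch_lo b \<in> {branch_lo b..branch_hi b}" "branch_hi b \<in> {branch_lo b..branch_hi b}"
    using branch_ends_between_nodes(2)[OF assms] by auto
  then show ?thesis
    using farey_on_branch[OF assms] branch_mat_at_ends[OF k] bk by (cases t) auto
qed

lemma farey_parabolic_at_0:
  "\<exists>b\<in>branches. branch_lo b = 0 \<and> farey q 0 = 0 \<and> (\<forall>x\<in>{0..branch_hi b}. x + x\<^sup>2 \<le> farey q x)"
proof -
  define b where "b = (q - 1, True)"
  have b: "b \<in> branches" unfolding b_def branches_def Kset_def using q_ge_3 by auto
  have lo: "branch_lo b = 0" using node_self q_ge_3 unfolding b_def by simp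
  have "farey q 0 = 0"
    using farey_on_branch[OF b, of 0] branch_mat_at_ends(1)[of "q - 1"]
      branch_ends_between_nodes[OF b] lo b q_ge_3 unfolding b_def branches_def by auto
  moreover have "x + x\<^sup>2 \<le> farey q x" if x: "x \<in> {0..branch_hi b}" for x
  proof -
    have den: "branch_den b y = 1 - s 2 * y" for y unfolding b_def using denom_last by simp
    have "0 \<in> {branch_lo b..branch_hi b}" "x \<in> {branch_lo b..branch_hi b}"
      using x lo branch_ends_between_nodes(2)[OF b] by auto
    then have "farey q x = x / (1 - s 2 * x)"
      using farey_diff_on_branch[OF b] \<open>farey q 0 = 0\<close> den unfolding b_def by fastforce
    moreover have "0 < 1 - s 2 * x"
      using branch_den_pos_le_1(1)[OF b \<open>x \<in> {branch_lo b..branch_hi b}\<close>] den by simp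
    moreover have "(x + x\<^sup>2) * (1 - s 2 * x) \<le> (x + x\<^sup>2) * (1 - x)"
      using sq_2_ge_1 x by (intro mult_left_mono) (auto simp: mult_le_cancel_right1)
    moreover have "(x + x\<^sup>2) * (1 - x) \<le> x"
      using x by (simp add: algebra_simps power2_eq_square power3_eq_cube)
    ultimately show ?thesis by (simp add: le_divide_eq)
  qed
  ultimately show ?thesis using b lo by blast
qed

lemma farey_branch_at_1: "\<exists>b\<in>branches. branch_hi b = 1 \<and> farey q 1 = 0"
proof -
  define b where "b = ((q + 1) div 2, False)"
  have k: "(q + 1) div 2 \<in> Kset q" using q_ge_3 unfolding Kset_def by auto
  then have b: "b \<in> branches" unfolding b_def branches_def by auto
  have hi: "branch_hi b = 1" using node_middle unfolding b_def by simp
  then have "farey q 1 = 0"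
    using farey_on_branch[OF b, of 1] branch_mat_at_ends(4)[OF k] branch_ends_between_nodes(2)[OF b]
      node_middle unfolding b_def by auto
  then show ?thesis using b hi by blast
qed

sublocale full_branch_map "farey q" branches branch_lo branch_hi
proof unfold_locales
  fix b assume b: "b \<in> branches"
  show "0 \<le> branch_lo b \<and> branch_lo b < branch_hi b \<and> branch_hi b \<le> 1"
    using branch_in_unit[OF b] branch_ends_between_nodes(2)[OF b] by simp
  show "continuous_on {branch_lo b..branch_hi b} (farey q)"
    by (rule farey_continuous_on_branch[OF b])
  show "mono_on {branch_lo b..branch_hi b} (farey q) \<or>
      antimono_on {branch_lo b..branch_hi b} (farey q)"
    by (rule farey_monotone_on_branch[OF b])
  show "{farey q (branch_lo b), farey q (branch_hi b)} = {0, 1}"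
    by (rule farey_at_branch_ends[OF b])
  fix x y assume "branch_lo b \<le> x" "x \<le> y" "y \<le> branch_hi b"
  then show "y - x \<le> \<bar>farey q y - farey q x\<bar>"
    using farey_expansion_on_branch[of b x y 1] branch_den_pos_le_1(2)[OF b] b by simp
qed (use branches_cover farey_uniformly_expanding_inside farey_parabolic_at_0
    farey_branch_at_1 in auto)

end

theorem proposition2p2:
  fixes q :: nat
  assumes "odd q" and "q \<ge> 3"
  shows "\<forall>B1 B2. openin (top_of_set {0..1::real}) B1 \<and> B1 \<noteq> {} \<and>
                 openin (top_of_set {0..1::real}) B2 \<and> B2 \<noteq> {} \<longrightarrow>
           (\<exists>N::nat. \<forall>n\<ge>N. (farey q ^^ n) ` B1 \<inter> B2 \<noteq> {})"
proof -
  interpret odd_farey q using assms by unfold_locales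
  show ?thesis using topologically_mixing by blast
qed

end
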